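(* Under the standing assumptions and Assumption A, there exist $\zeta<1$ and $K=K(\zeta)>0$ such that for all integers $a_1>K$ and all $m\in\mathbb N$, $$\sum_{\substack{a=a_1a_2\cdots a_m:\ |a|=m,\\ a\ \text{is } a_1\text{-conservative}}}\mathbb P\big(a\text{ has at least } a_1\text{ children before }\varnothing\text{ explodes}\big)\le \zeta^{m-1}\,\mathcal M_{\lambda_{a_1}}(Y_{a_1})\,\mathbb E\big[\mathcal L_{\lambda_{a_1}}(\mathcal P_{a_1};W)\big],$$ where the sum is over all $a\in\mathbb N^m$ with first entry equal to the given $a_1$, and $(\lambda_n)$, $(Y_n)$ are as in Assumption A.
   Context: Setting: an $(X,W)$-CMJ process on the Ulam–Harris tree $\mathcal U_\infty=\bigcup_{n\ge0}\mathbb N^n$ with weights $W_u\in S$, inter-birth times $X(uj)$, birth times $\mathcal B(\varnothing)=0$, $\mathcal B(ui)=\mathcal B(u)+\sum_{j\le i}X(uj)$, $\mathcal P_i(u)=\sum_{j=1}^iX(uj)$, $\mathcal P(u)=\sum_{j\ge1}X(uj)$, $\mathcal P_i$ a copy of $\mathcal P_i(\varnothing)$, $X(i)=X(\varnothing i)$, $W=W_\varnothing$. Standing assumptions: $((X(uj))_j,W_u)$ i.i.d. over $u$; conditionally on $W_u=w$ the $X_w(ui)$, $i\in\mathbb N$, are independent. $\mathcal M_\lambda(Y)=\mathbb E[e^{\lambda Y}]$, $\mathcal L_\lambda(Z;W)=\mathbb E[e^{-\lambda Z}\mid W]$. Assumption A: (1) positive finite-mean $Y_n$ with $\sum_{i>n}X_w(i)$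 stochastically dominated by $Y_n$ for all $w\in S$; (2) an increasing $(\lambda_n)\subset(0,\infty)$, $\lambda_n\to\infty$, with $\sum_n\mathcal M_{\lambda_n}(Y_n)\mathbb E[\mathcal L_{\lambda_n}(\mathcal P_n(\varnothing);W)]<\infty$; (3) $\mathbb E[\sup\{k:X(k)=0\}]<1$ and a.s. $\sum_{i>n}X(i)>0$ for all $n$. Terminology: "$a$ has at least $k$ children before $b$ explodes" means $\mathcal B(a)+\mathcal P_k(a)<\mathcal B(b)+\mathcal P(b)$. A sequence $a=a_1\cdots a_m$ is $a_1$-conservative if $a_j\le a_1$ for all $j\in\{2,\dots,m\}$. *)

theory Defs
  imports "HOL-Probability.Probability"
begin

definition tree_nodes :: "nat list set" where
  "tree_nodes = {u. \<forall>a\<in>set u. 1 \<le> a}"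

text \<open>Birth time B(u): B([]) = 0, B(u i) = B(u) + sum_{j \<le> i} X(u j).\<close>
definition birth :: "(nat list \<Rightarrow> 'a \<Rightarrow> real) \<Rightarrow> nat list \<Rightarrow> 'a \<Rightarrow> real" where
  "birth X u \<omega> = (\<Sum>k<length u. \<Sum>j=1..u!k. X (take k u @ [j]) \<omega>)"

definition partial_prog :: "(nat list \<Rightarrow> 'a \<Rightarrow> real) \<Rightarrow> nat list \<Rightarrow> nat \<Rightarrow> 'a \<Rightarrow> real" where
  "partial_prog X u k \<omega> = (\<Sum>j=1..k. X (u @ [j]) \<omega>)"

definition total_prog :: "(nat list \<Rightarrow> 'a \<Rightarrow> real) \<Rightarrow> nat list \<Rightarrow> 'a \<Rightarrow> ennreal" where
  "total_prog X u \<omega> = (\<Sum>j. ennreal (X (u @ [Suc j]) \<omega>))"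

text \<open>a has at least k children before b explodes: B(a) + P_k(a) < B(b) + P(b).\<close>
definition children_before :: "(nat list \<Rightarrow> 'a \<Rightarrow> real) \<Rightarrow> nat list \<Rightarrow> nat \<Rightarrow> nat list \<Rightarrow> 'a \<Rightarrow> bool" where
  "children_before X a k b \<omega> \<longleftrightarrow>
     ennreal (birth X a \<omega> + partial_prog X a k \<omega>) < ennreal (birth X b \<omega>) + total_prog X b \<omega>"

definition conservative :: "nat list \<Rightarrow> bool" where
  "conservative a \<longleftrightarrow> a \<noteq> [] \<and> (\<forall>j\<in>set (tl a). j \<le> hd a)"

definition child_seq :: "(nat list \<Rightarrow> 'a \<Rightarrow> real) \<Rightarrow> nat list \<Rightarrow> 'a \<Rightarrow> nat \<Rightarrow> real" where
  "child_seq X u \<omega> = (\<lambda>j. X (u @ [Suc j]) \<omega>)"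

definition mgf :: "'b measure \<Rightarrow> ('b \<Rightarrow> real) \<Rightarrow> real \<Rightarrow> ennreal" where
  "mgf MY Y l = (\<integral>\<^sup>+ y. ennreal (exp (l * Y y)) \<partial>MY)"

text \<open>L_lambda(P_n; W) evaluated at W = w, via the conditional law kern w of
  (X(j))_{j \<ge> 1} given W = w (0-based sequence).\<close>
definition cond_laplace :: "('s \<Rightarrow> (nat \<Rightarrow> real) measure) \<Rightarrow> real \<Rightarrow> nat \<Rightarrow> 's \<Rightarrow> ennreal" where
  "cond_laplace kern l n w = (\<integral>\<^sup>+ x. ennreal (exp (- l * (\<Sum>j<n. x j))) \<partial>(kern w))"

text \<open>Standing assumptions of the (X,W)-CMJ process.  kern w is the conditional law of the
  child sequence (X(j))_j given W = w; the last condition says that, conditionally on W = w,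
  the X_w(i) are independent.\<close>
definition cmj_standing ::
  "'a measure \<Rightarrow> 's measure \<Rightarrow> ('s \<Rightarrow> (nat \<Rightarrow> real) measure) \<Rightarrow>
   (nat list \<Rightarrow> 'a \<Rightarrow> 's) \<Rightarrow> (nat list \<Rightarrow> 'a \<Rightarrow> real) \<Rightarrow> bool" where
  "cmj_standing M S kern W X \<longleftrightarrow>
     prob_space M \<and>
     (\<forall>u\<in>tree_nodes. W u \<in> M \<rightarrow>\<^sub>M S) \<and>
     (\<forall>u\<in>tree_nodes. X u \<in> borel_measurable M) \<and>
     (\<forall>u\<in>tree_nodes. \<forall>\<omega>. 0 \<le> X u \<omega>) \<and>
     prob_space.indep_vars M (\<lambda>_. S \<Otimes>\<^sub>M PiM UNIV (\<lambda>_. borel))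
        (\<lambda>u \<omega>. (W u \<omega>, child_seq X u \<omega>)) tree_nodes \<and>
     (\<forall>u\<in>tree_nodes.
        distr M (S \<Otimes>\<^sub>M PiM UNIV (\<lambda>_. borel)) (\<lambda>\<omega>. (W u \<omega>, child_seq X u \<omega>)) =
        distr M (S \<Otimes>\<^sub>M PiM UNIV (\<lambda>_. borel)) (\<lambda>\<omega>. (W [] \<omega>, child_seq X [] \<omega>))) \<and>
     kern \<in> S \<rightarrow>\<^sub>M prob_algebra (PiM UNIV (\<lambda>_. borel)) \<and>
     distr M (S \<Otimes>\<^sub>M PiM UNIV (\<lambda>_. borel)) (\<lambda>\<omega>. (W [] \<omega>, child_seq X [] \<omega>)) =
       bind (distr M S (W [])) (\<lambda>w. distr (kern w) (S \<Otimes>\<^sub>M PiM UNIV (\<lambda>_. borel)) (\<lambda>x. (w, x))) \<and>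
     (\<forall>w\<in>space S. kern w = PiM UNIV (\<lambda>j. distr (kern w) borel (\<lambda>x. x j)))"

definition assumption_A ::
  "'a measure \<Rightarrow> 's measure \<Rightarrow> ('s \<Rightarrow> (nat \<Rightarrow> real) measure) \<Rightarrow>
   (nat list \<Rightarrow> 'a \<Rightarrow> 's) \<Rightarrow> (nat list \<Rightarrow> 'a \<Rightarrow> real) \<Rightarrow>
   'b measure \<Rightarrow> (nat \<Rightarrow> 'b \<Rightarrow> real) \<Rightarrow> (nat \<Rightarrow> real) \<Rightarrow> bool" where
  "assumption_A M S kern W X MY Y lam \<longleftrightarrow>
     prob_space MY \<and>
     \<comment> \<open>(1)\<close>
     (\<forall>n\<ge>1. Y n \<in> borel_measurable MY \<and> (\<forall>y\<in>space MY. 0 < Y n y) \<and> integrable MY (Y n) \<and>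
        (\<forall>w\<in>space S. \<forall>t::real.
           emeasure (kern w) {x\<in>space (kern w). ennreal t < (\<Sum>i. ennreal (x (i + n)))}
             \<le> emeasure MY {y\<in>space MY. t < Y n y})) \<and>
     \<comment> \<open>(2)\<close>
     (\<forall>n\<ge>1. 0 < lam n) \<and> (\<forall>n m. 1 \<le> n \<longrightarrow> n < m \<longrightarrow> lam n < lam m) \<and>
     filterlim lam at_top sequentially \<and>
     (\<Sum>n. mgf MY (Y (Suc n)) (lam (Suc n)) *
            (\<integral>\<^sup>+ w. cond_laplace kern (lam (Suc n)) (Suc n) w \<partial>(distr M S (W [])))) < \<infinity> \<and>
     \<comment> \<open>(3)\<close>
     (\<integral>\<^sup>+ \<omega>. Sup {ennreal (real k) | k. 1 \<le> k \<and> X [k] \<omega> = 0} \<partial>M) < 1 \<and>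
     (AE \<omega> in M. \<forall>n. 0 < (\<Sum>i. ennreal (X [i + n + 1] \<omega>)))"

end

theory Submission
  imports Defs
begin

text \<open>If \<open>a\<close> has \<open>a\<^sub>1\<close> children before the root explodes, then the partial progenies
  \<open>\<P>\<^bsub>a\<^sub>2\<^esub>(a\<^sub>1), \<P>\<^bsub>a\<^sub>3\<^esub>(a\<^sub>1a\<^sub>2), \<dots>, \<P>\<^bsub>a\<^sub>1\<^esub>(a)\<close> along the path add up to less
  than the progeny \<open>\<Sum>\<^bsub>i>a\<^sub>1\<^esub> X(i)\<close> of the root after its first \<open>a\<^sub>1\<close> children.
  An exponential Chebyshev bound with rate \<open>\<lambda>\<^bsub>a\<^sub>1\<^esub>\<close>, independence of the nodes on the path
  and stochastic domination of the tail by \<open>Y\<^bsub>a\<^sub>1\<^esub>\<close> bound the probability by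
  \<open>\<M>(Y\<^bsub>a\<^sub>1\<^esub>) \<Prod>\<^sub>j c(a\<^sub>1, a\<^sub>j)\<close>, where \<open>c(n, k) = \<bbbE>[\<L>\<^bsub>\<lambda>\<^sub>n\<^esub>(\<P>\<^sub>k; W)]\<close>.
  Summing over conservative words gives the factor \<open>(\<Sum>\<^bsub>k\<le>a\<^sub>1\<^esub> c(a\<^sub>1, k))\<^sup>m\<^sup>-\<^sup>1\<close>,
  and this column sum is eventually below some \<open>\<zeta> < 1\<close>: as \<open>n \<rightarrow> \<infinity>\<close>, \<open>c(n, k)\<close> decreases to
  \<open>\<bbbP>(\<P>\<^sub>k = 0)\<close>, whose sum is at most \<open>\<bbbE>[sup{k : X(k) = 0}] < 1\<close>, while the large \<open>k\<close> are
  controlled by \<open>c(n, k) \<le> c(k, k)\<close> and the summability in Assumption A.\<close>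

text \<open>\<open>t \<mapsto> e\<^sup>l\<^sup>t\<close> on \<open>[0, \<infinity>]\<close>; the value \<open>\<infinity>\<close> at \<open>\<infinity>\<close> is the right one only for \<open>l > 0\<close>,
  the only case used.\<close>
definition exp_ennreal :: "real \<Rightarrow> ennreal \<Rightarrow> ennreal" where
  "exp_ennreal l t = (if t = \<top> then \<top> else ennreal (exp (l * enn2real t)))"

lemma measurable_exp_ennreal[measurable]: "exp_ennreal l \<in> borel_measurable borel"
  unfolding exp_ennreal_def by measurable

lemma exp_ennreal_ennreal: "0 \<le> t \<Longrightarrow> exp_ennreal l (ennreal t) = ennreal (exp (l * t))"
  by (simp add: exp_ennreal_def)

lemma one_le_exp_ennreal_mult:
  assumes "0 < l" "ennreal q < t"
  shows "1 \<le> exp_ennreal l t * ennreal (exp (- l * q))"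
proof (cases t)
  case (real r)
  with assms have "q < r" by (metis ennreal_less_iff ennreal_less_zero_iff linorder_not_less order_less_le)
  with assms(1) have "1 \<le> exp (l * r) * exp (- l * q)"
    by (simp add: exp_add[symmetric] algebra_simps)
  with real show ?thesis by (simp add: exp_ennreal_def ennreal_mult[symmetric] del: ennreal_mult)
next
  case top
  then show ?thesis by (simp add: exp_ennreal_def ennreal_mult_top mult.commute)
qed

lemma emeasure_lborel_atLeast: "emeasure lborel {a::real..} = \<top>"
proof -
  have "of_nat n \<le> emeasure lborel {a::real..}" for n
  proof -
    have "of_nat n = emeasure lborel {a..a + real n}"
      by (simp add: ennreal_of_nat_eq_real_of_nat)
    also have "\<dots> \<le> emeasure lborel {a..}"
      by (rule emeasure_mono) auto
    finally show ?thesis .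
  qed
  then have "(SUP n. of_nat n :: ennreal) \<le> emeasure lborel {a..}"
    by (rule SUP_least)
  then show ?thesis
    by (simp add: ennreal_SUP_of_nat_eq_top top_unique)
qed

lemma exp_ennreal_eq_one_plus_nn_integral:
  assumes l: "0 < l"
  shows "exp_ennreal l t =
    1 + (\<integral>\<^sup>+ s. ennreal (l * exp (l * s)) * indicator {0..} s * indicator {s. ennreal s < t} s \<partial>lborel)"
proof (cases t)
  case (real r)
  have "(\<integral>\<^sup>+ s. ennreal (l * exp (l * s)) * indicator {0..} s * indicator {s. ennreal s < t} s \<partial>lborel)
      = (\<integral>\<^sup>+ s. ennreal (l * exp (l * s)) * indicator {0..r} s \<partial>lborel)"
    using AE_lborel_singleton[of r]
    by (intro nn_integral_cong_AE, eventually_elim) (use real in \<open>auto simp: indicator_def ennreal_less_iff\<close>)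
  also have "\<dots> = ennreal (exp (l * r) - exp (l * 0))"
    by (rule nn_integral_FTC_Icc) (use real l in \<open>auto intro!: derivative_eq_intros\<close>)
  moreover have "ennreal (exp (l * r)) = 1 + ennreal (exp (l * r) - 1)"
    using real l ennreal_plus[of 1 "exp (l * r) - 1"] by simp
  ultimately show ?thesis
    using real by (simp add: exp_ennreal_def)
next
  case top
  have "\<top> = (\<integral>\<^sup>+ s. ennreal l * indicator {0..} (s::real) \<partial>lborel)"
    using l by (simp add: nn_integral_cmult emeasure_lborel_atLeast ennreal_mult_top)
  also have "\<dots> \<le> (\<integral>\<^sup>+ s. ennreal (l * exp (l * s)) * indicator {0..} s * indicator {s. ennreal s < t} s \<partial>lborel)"
    using top l by (intro nn_integral_mono) (auto simp: indicator_def intro!: ennreal_leI)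
  finally show ?thesis
    using top by (simp add: exp_ennreal_def top_unique)
qed

lemma (in prob_space) nn_integral_exp_ennreal:
  assumes f[measurable]: "f \<in> borel_measurable M" and l: "0 < l"
  shows "(\<integral>\<^sup>+ x. exp_ennreal l (f x) \<partial>M) =
    1 + (\<integral>\<^sup>+ s. ennreal (l * exp (l * s)) * indicator {0..} s * emeasure M {x\<in>space M. ennreal s < f x} \<partial>lborel)"
proof -
  interpret pair_sigma_finite M lborel ..
  have "(\<integral>\<^sup>+ x. exp_ennreal l (f x) \<partial>M) =
      1 + (\<integral>\<^sup>+ x. (\<integral>\<^sup>+ s. ennreal (l * exp (l * s)) * indicator {0..} s * indicator {s. ennreal s < f x} s \<partial>lborel) \<partial>M)"
    by (simp add: exp_ennreal_eq_one_plus_nn_integral[OF l] nn_integral_add emeasure_space_1)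
  also have "(\<integral>\<^sup>+ x. (\<integral>\<^sup>+ s. ennreal (l * exp (l * s)) * indicator {0..} s * indicator {s. ennreal s < f x} s \<partial>lborel) \<partial>M)
     = (\<integral>\<^sup>+ s. (\<integral>\<^sup>+ x. ennreal (l * exp (l * s)) * indicator {0..} s * indicator {s. ennreal s < f x} s \<partial>M) \<partial>lborel)"
    by (rule Fubini'[symmetric]) measurable
  also have "\<dots> = (\<integral>\<^sup>+ s. ennreal (l * exp (l * s)) * indicator {0..} s * emeasure M {x\<in>space M. ennreal s < f x} \<partial>lborel)"
  proof (rule nn_integral_cong)
    fix s :: real
    have "(\<integral>\<^sup>+ x. ennreal (l * exp (l * s)) * indicator {0..} s * indicator {s. ennreal s < f x} s \<partial>M)
       = ennreal (l * exp (l * s)) * indicator {0..} s * (\<integral>\<^sup>+ x. indicator {x\<in>space M. ennreal s < f x} x \<partial>M)"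
      by (subst nn_integral_cmult[symmetric]) (auto intro!: nn_integral_cong simp: indicator_def)
    then show "(\<integral>\<^sup>+ x. ennreal (l * exp (l * s)) * indicator {0..} s * indicator {s. ennreal s < f x} s \<partial>M)
       = ennreal (l * exp (l * s)) * indicator {0..} s * emeasure M {x\<in>space M. ennreal s < f x}"
      by simp
  qed
  finally show ?thesis .
qed

lemma nn_integral_exp_ennreal_le_stoch_dom:
  assumes N: "prob_space N" and Q: "prob_space Q"
    and f[measurable]: "f \<in> borel_measurable N" and g[measurable]: "g \<in> borel_measurable Q"
    and g_nonneg: "\<And>y. y \<in> space Q \<Longrightarrow> 0 \<le> g y" and l: "0 < l"
    and dom: "\<And>t. emeasure N {x\<in>space N. ennreal t < f x} \<le> emeasure Q {y\<in>space Q. t < g y}"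
  shows "(\<integral>\<^sup>+ x. exp_ennreal l (f x) \<partial>N) \<le> (\<integral>\<^sup>+ y. ennreal (exp (l * g y)) \<partial>Q)"
proof -
  have "(\<integral>\<^sup>+ y. ennreal (exp (l * g y)) \<partial>Q) = (\<integral>\<^sup>+ y. exp_ennreal l (ennreal (g y)) \<partial>Q)"
    using g_nonneg by (intro nn_integral_cong) (simp add: exp_ennreal_ennreal)
  also have "\<dots> = 1 + (\<integral>\<^sup>+ s. ennreal (l * exp (l * s)) * indicator {0..} s * emeasure Q {y\<in>space Q. s < g y} \<partial>lborel)"
    by (subst prob_space.nn_integral_exp_ennreal[OF Q _ l])
       (auto simp: indicator_def ennreal_less_iff intro!: nn_integral_cong arg_cong2[where f=emeasure])
  finally show ?thesis
    unfolding prob_space.nn_integral_exp_ennreal[OF N f l]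
    by (simp add: add_left_mono nn_integral_mono mult_left_mono dom)
qed

lemma tendsto_exp_neg_mult_at_top:
  fixes g :: "'a \<Rightarrow> real"
  assumes g: "filterlim g at_top F" and p: "0 \<le> p"
  shows "((\<lambda>x. exp (- (g x * p))) \<longlongrightarrow> (if p = 0 then 1 else 0)) F"
proof (cases "p = 0")
  case False
  with p have "filterlim (\<lambda>x. p * g x) at_top F"
    by (intro filterlim_tendsto_pos_mult_at_top[OF tendsto_const _ g]) simp
  then have "filterlim (\<lambda>x. - (p * g x)) at_bot F" by (simp add: filterlim_uminus_at_top)
  with False show ?thesis by (simp add: filterlim_compose[OF exp_at_bot] mult.commute)
qed simp

lemma sum_lists_length_prod_list:
  fixes c :: "'a \<Rightarrow> 'b::comm_semiring_1"
  assumes "finite B"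
  shows "(\<Sum>l\<in>{l. set l \<subseteq> B \<and> length l = n}. prod_list (map c l)) = (\<Sum>x\<in>B. c x) ^ n"
proof (induction n)
  case (Suc n)
  let ?L = "{l. set l \<subseteq> B \<and> length l = n}"
  have "inj_on (\<lambda>(l, x). x # l) (?L \<times> B)"
    by (auto simp: inj_on_def)
  then have "(\<Sum>l\<in>{l. set l \<subseteq> B \<and> length l = Suc n}. prod_list (map c l))
      = (\<Sum>(l, x)\<in>?L \<times> B. c x * prod_list (map c l))"
    unfolding lists_length_Suc_eq by (subst sum.reindex) (auto simp: case_prod_beta)
  also have "\<dots> = (\<Sum>x\<in>B. c x) * (\<Sum>l\<in>?L. prod_list (map c l))"
    by (simp add: sum.cartesian_product[symmetric] sum_distrib_left sum_distrib_right sum.swap[of _ B])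
  finally show ?case
    using Suc by simp
next
  case 0
  have "{l. set l \<subseteq> B \<and> length l = 0} = {[]}" by auto
  then show ?case by simp
qed

lemma ennreal_suminf_tail_le:
  fixes f :: "nat \<Rightarrow> ennreal"
  assumes fin: "(\<Sum>k. f k) < \<infinity>" and \<delta>: "0 < \<delta>"
  shows "\<exists>k0. \<forall>n. (\<Sum>k\<in>{k0<..n}. f k) \<le> ennreal \<delta>"
proof -
  define s where "s k = enn2real (f k)" for k
  have f_eq: "f k = ennreal (s k)" for k
    using ennreal_suminf_lessD[OF fin, of k] by (simp add: s_def less_top)
  have s_nonneg: "0 \<le> s k" for k by (simp add: s_def)
  have "summable s"
    using fin by (intro summable_suminf_not_top s_nonneg) (simp add: f_eq[symmetric])
  then obtain k0 where k0_tail: "\<forall>n\<ge>k0. norm (\<Sum>i. s (i + n)) < \<delta>"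
    using suminf_exist_split[OF \<delta>] by blast
  have k0: "(\<Sum>i. s (i + Suc k0)) < \<delta>"
    using k0_tail[rule_format, of "Suc k0"] by (simp add: abs_less_iff)
  have "(\<Sum>k\<in>{k0<..n}. s k) \<le> (\<Sum>i. s (i + Suc k0))" for n
  proof -
    have "(\<Sum>k\<in>{k0<..n}. s k) = (\<Sum>i\<in>{..<n - k0}. s (i + Suc k0))"
      by (rule sum.reindex_bij_witness[of _ "\<lambda>i. i + Suc k0" "\<lambda>k. k - Suc k0"]) auto
    also have "\<dots> \<le> (\<Sum>i. s (i + Suc k0))"
      using summable_ignore_initial_segment[OF \<open>summable s\<close>, of "Suc k0"] s_nonneg
      by (intro sum_le_suminf) auto
    finally show ?thesis .
  qed
  with k0 have "(\<Sum>k\<in>{k0<..n}. s k) \<le> \<delta>" for n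
    by (meson order.trans order_less_imp_le)
  moreover have "(\<Sum>k\<in>{k0<..n}. f k) = ennreal (\<Sum>k\<in>{k0<..n}. s k)" for n
    by (simp add: f_eq s_nonneg sum_ennreal)
  ultimately show ?thesis
    by (metis ennreal_leI)
qed

text \<open>The columns \<open>k \<le> k0\<close> are controlled by the limits \<open>z k\<close>, the remaining ones by the
  tail of the summable diagonal.\<close>
lemma eventually_sum_le_less_one:
  fixes c :: "nat \<Rightarrow> nat \<Rightarrow> ennreal" and z :: "nat \<Rightarrow> ennreal" and b :: ennreal
  assumes dom: "\<And>n k. 1 \<le> k \<Longrightarrow> k \<le> n \<Longrightarrow> c n k \<le> c k k"
    and diag: "(\<Sum>k. c k k) < \<infinity>"
    and lim: "\<And>k. (\<lambda>n. c n k) \<longlonglongrightarrow> z k"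
    and z_le: "\<And>N. (\<Sum>k\<in>{1..N}. z k) \<le> b" and "b < 1"
  shows "\<exists>\<zeta>. 0 \<le> \<zeta> \<and> \<zeta> < 1 \<and> (\<forall>\<^sub>F n in sequentially. (\<Sum>k\<in>{1..n}. c n k) \<le> ennreal \<zeta>)"
proof -
  obtain e where e: "b = ennreal e" "0 \<le> e" "e < 1"
    using \<open>b < 1\<close> by (cases b) (auto simp: top_unique)
  define \<delta> where "\<delta> = (1 - e) / 3"
  have \<delta>: "0 < \<delta>" using e by (simp add: \<delta>_def)
  obtain k0 where k0: "\<And>n. (\<Sum>k\<in>{k0<..n}. c k k) \<le> ennreal \<delta>"
    using ennreal_suminf_tail_le[OF diag \<delta>] by blast
  have "(\<lambda>n. \<Sum>k\<in>{1..k0}. c n k) \<longlonglongrightarrow> (\<Sum>k\<in>{1..k0}. z k)"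
    by (intro tendsto_sum lim)
  moreover have "(\<Sum>k\<in>{1..k0}. z k) < ennreal (e + \<delta>)"
    using z_le[of k0] e \<delta> by (auto intro: le_less_trans simp: ennreal_lessI)
  ultimately have head: "\<forall>\<^sub>F n in sequentially. (\<Sum>k\<in>{1..k0}. c n k) < ennreal (e + \<delta>)"
    by (rule order_tendstoD)
  have "\<forall>\<^sub>F n in sequentially. (\<Sum>k\<in>{1..n}. c n k) \<le> ennreal (e + 2 * \<delta>)"
    using head
  proof eventually_elim
    case (elim n)
    have "(\<Sum>k\<in>{1..n}. c n k) \<le> (\<Sum>k\<in>{1..k0} \<union> {k0<..n}. c n k)"
      by (intro sum_mono2) auto
    also have "\<dots> = (\<Sum>k\<in>{1..k0}. c n k) + (\<Sum>k\<in>{k0<..n}. c n k)"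
      by (intro sum.union_disjoint) auto
    also have "(\<Sum>k\<in>{k0<..n}. c n k) \<le> (\<Sum>k\<in>{k0<..n}. c k k)"
      by (intro sum_mono dom) auto
    also have "(\<Sum>k\<in>{1..k0}. c n k) + (\<Sum>k\<in>{k0<..n}. c k k) \<le> ennreal (e + \<delta>) + ennreal \<delta>"
      using elim k0 by (intro add_mono) auto
    finally show ?case
      using e \<delta> by (simp add: ennreal_plus[symmetric] add.commute del: ennreal_plus)
  qed
  moreover have "0 \<le> e + 2 * \<delta>" "e + 2 * \<delta> < 1"
    using e \<delta> by (auto simp: \<delta>_def field_simps)
  ultimately show ?thesis by blast
qed

lemma birth_plus_partial_prog:
  assumes "a \<noteq> []"
  shows "birth X a \<omega> + partial_prog X a (hd a) \<omega> =
    partial_prog X [] (hd a) \<omega> + (\<Sum>i<length a. partial_prog X (take (Suc i) a) (rotate1 a ! i) \<omega>)"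
proof -
  obtain x l where a: "a = x # l" using assms by (cases a) auto
  have "birth X a \<omega> = (\<Sum>i<length a. partial_prog X (take i a) (a ! i) \<omega>)"
    by (simp add: birth_def partial_prog_def)
  also have "\<dots> = partial_prog X [] x \<omega> + (\<Sum>i<length l. partial_prog X (take (Suc i) a) (l ! i) \<omega>)"
    unfolding a length_Cons sum.lessThan_Suc_shift by simp
  finally show ?thesis
    by (simp add: a sum.lessThan_Suc nth_append del: take_Suc_Cons)
qed

lemma prod_list_map_rotate1: "prod_list (map f (rotate1 xs)) = prod_list (map f xs)"
  for f :: "'a \<Rightarrow> 'b::comm_monoid_mult"
  by (cases xs) (simp_all add: mult.commute)

lemma conservative_nodes_eq_image:
  assumes "1 \<le> a1"
  shows "{a. a \<in> tree_nodes \<and> length a = Suc n \<and> hd a = a1 \<and> conservative a}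
       = (#) a1 ` {l. set l \<subseteq> {1..a1} \<and> length l = n}"
proof (intro equalityI subsetI)
  fix a assume "a \<in> {a. a \<in> tree_nodes \<and> length a = Suc n \<and> hd a = a1 \<and> conservative a}"
  then show "a \<in> (#) a1 ` {l. set l \<subseteq> {1..a1} \<and> length l = n}"
    by (cases a) (auto simp: tree_nodes_def conservative_def)
qed (use assms in \<open>auto simp: tree_nodes_def conservative_def\<close>)

lemma tree_nodes_take: "a \<in> tree_nodes \<Longrightarrow> take j a \<in> tree_nodes"
  by (auto simp: tree_nodes_def dest: in_set_takeD)

lemma tree_nodes_snoc: "u \<in> tree_nodes \<Longrightarrow> 1 \<le> j \<Longrightarrow> u @ [j] \<in> tree_nodes"
  by (auto simp: tree_nodes_def)

lemma Nil_in_tree_nodes[simp]: "[] \<in> tree_nodes"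
  by (simp add: tree_nodes_def)

lemma partial_prog_eq_sum_child_seq: "partial_prog X u k \<omega> = (\<Sum>j<k. child_seq X u \<omega> j)"
  using sum_bounds_lt_plus1[of "\<lambda>j. X (u @ [j]) \<omega>" k] by (simp add: partial_prog_def child_seq_def)

locale cmj_process =
  fixes M :: "'a measure" and S :: "'s measure" and kern :: "'s \<Rightarrow> (nat \<Rightarrow> real) measure"
    and W :: "nat list \<Rightarrow> 'a \<Rightarrow> 's" and X :: "nat list \<Rightarrow> 'a \<Rightarrow> real"
  assumes standing: "cmj_standing M S kern W X"
begin

abbreviation "seq_space \<equiv> PiM UNIV (\<lambda>_::nat. borel :: real measure)"

definition Z :: "nat list \<Rightarrow> 'a \<Rightarrow> 's \<times> (nat \<Rightarrow> real)" where
  "Z u \<omega> = (W u \<omega>, child_seq X u \<omega>)"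

sublocale prob_space M
  using standing by (simp add: cmj_standing_def)

lemma indep_vars_Z: "indep_vars (\<lambda>_. S \<Otimes>\<^sub>M seq_space) Z tree_nodes"
  using standing by (simp add: cmj_standing_def Z_def[abs_def])

lemma X_nonneg: "u \<in> tree_nodes \<Longrightarrow> 0 \<le> X u \<omega>"
  using standing by (simp add: cmj_standing_def)

lemma measurable_X[measurable]: "u \<in> tree_nodes \<Longrightarrow> X u \<in> borel_measurable M"
  using standing by (simp add: cmj_standing_def)

lemma partial_prog_nonneg: "u \<in> tree_nodes \<Longrightarrow> 0 \<le> partial_prog X u k \<omega>"
  by (auto simp: partial_prog_def intro!: sum_nonneg X_nonneg tree_nodes_snoc)

lemma measurable_partial_prog_root[measurable]: "partial_prog X [] k \<in> borel_measurable M"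
  unfolding partial_prog_def[abs_def]
  by (intro borel_measurable_sum measurable_X) (auto simp: tree_nodes_def)

lemma measurable_W: "u \<in> tree_nodes \<Longrightarrow> W u \<in> M \<rightarrow>\<^sub>M S"
  using standing by (simp add: cmj_standing_def)

lemma measurable_kern: "kern \<in> S \<rightarrow>\<^sub>M prob_algebra seq_space"
  using standing by (simp add: cmj_standing_def)

lemma sets_kern: "w \<in> space S \<Longrightarrow> sets (kern w) = sets seq_space"
  and prob_space_kern: "w \<in> space S \<Longrightarrow> prob_space (kern w)"
  using measurable_space[OF measurable_kern] by (simp_all add: space_prob_algebra)

text \<open>All nodes have the law of the root, and the root's child sequence is a mixture of the
  kernels over the law of \<open>W\<close>.\<close>
lemma nn_integral_child_seq:
  assumes u: "u \<in> tree_nodes" and f[measurable]: "f \<in> borel_measurable seq_space"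
  shows "(\<integral>\<^sup>+\<omega>. f (child_seq X u \<omega>) \<partial>M) = (\<integral>\<^sup>+w. (\<integral>\<^sup>+x. f x \<partial>kern w) \<partial>distr M S (W []))"
proof -
  let ?SX = "S \<Otimes>\<^sub>M seq_space"
  have Z[measurable]: "Z u \<in> M \<rightarrow>\<^sub>M ?SX"
    using indep_vars_Z u by (auto simp: indep_vars_def)
  have law: "distr M ?SX (Z u) = distr M ?SX (Z [])"
    using standing u by (simp add: cmj_standing_def Z_def[abs_def])
  have mix: "distr M ?SX (Z []) = distr M S (W []) \<bind> (\<lambda>w. distr (kern w) ?SX (Pair w))"
    using standing by (simp add: cmj_standing_def Z_def[abs_def])
  note measurable_W[OF Nil_in_tree_nodes, measurable]
  have "(\<integral>\<^sup>+\<omega>. f (child_seq X u \<omega>) \<partial>M) = (\<integral>\<^sup>+z. f (snd z) \<partial>distr M ?SX (Z u))"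
    using u by (subst nn_integral_distr) (auto simp: Z_def)
  also have "\<dots> = (\<integral>\<^sup>+w. (\<integral>\<^sup>+z. f (snd z) \<partial>distr (kern w) ?SX (Pair w)) \<partial>distr M S (W []))"
    unfolding law mix
  proof (rule nn_integral_bind)
    have "kern \<in> distr M S (W []) \<rightarrow>\<^sub>M subprob_algebra seq_space"
      using measurable_prob_algebraD[OF measurable_kern] by simp
    moreover have "(\<lambda>(w, x). (w, x)) \<in> distr M S (W []) \<Otimes>\<^sub>M seq_space \<rightarrow>\<^sub>M ?SX"
      by (simp add: measurable_ident_sets[OF sets_pair_measure_cong] id_def)
    ultimately show "(\<lambda>w. distr (kern w) ?SX (Pair w)) \<in> distr M S (W []) \<rightarrow>\<^sub>M subprob_algebra ?SX"
      by (rule measurable_distr2[rotated])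
  qed (rule measurable_compose[OF measurable_snd f])
  also have "\<dots> = (\<integral>\<^sup>+w. (\<integral>\<^sup>+x. f x \<partial>kern w) \<partial>distr M S (W []))"
  proof (rule nn_integral_cong)
    fix w assume "w \<in> space (distr M S (W []))"
    then have w: "w \<in> space S" by simp
    have [measurable]: "Pair w \<in> kern w \<rightarrow>\<^sub>M ?SX"
      using w by (simp add: measurable_cong_sets[OF sets_kern[OF w] refl])
    show "(\<integral>\<^sup>+z. f (snd z) \<partial>distr (kern w) ?SX (Pair w)) = (\<integral>\<^sup>+x. f x \<partial>kern w)"
      by (subst nn_integral_distr) auto
  qed
  finally show ?thesis .
qed


lemma nn_integral_exp_partial_prog:
  "u \<in> tree_nodes \<Longrightarrow> (\<integral>\<^sup>+\<omega>. ennreal (exp (- l * partial_prog X u k \<omega>)) \<partial>M) =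
    (\<integral>\<^sup>+w. cond_laplace kern l k w \<partial>distr M S (W []))"
  unfolding partial_prog_eq_sum_child_seq cond_laplace_def
  by (rule nn_integral_child_seq) measurable

text \<open>The ancestors \<open>take i a\<close> of a node have distinct lengths, so functionals of their child
  sequences are independent.\<close>
lemma nn_integral_prod_ancestors:
  assumes a: "a \<in> tree_nodes" and \<psi>[measurable]: "\<And>i. \<psi> i \<in> borel_measurable seq_space"
  shows "(\<integral>\<^sup>+\<omega>. (\<Prod>i\<le>length a. \<psi> i (child_seq X (take i a) \<omega>)) \<partial>M) =
    (\<Prod>i\<le>length a. \<integral>\<^sup>+\<omega>. \<psi> i (child_seq X (take i a) \<omega>) \<partial>M)"
proof -
  define \<phi> where "\<phi> u z = \<psi> (length u) (snd z)" for u :: "nat list" and z :: "'s \<times> (nat \<Rightarrow> real)"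
  define I where "I = (\<lambda>i. take i a) ` {..length a}"
  have inj: "inj_on (\<lambda>i. take i a) {..length a}"
    by (rule inj_onI) (metis atMost_iff length_take min.absorb2)
  have "I \<subseteq> tree_nodes"
    using tree_nodes_take[OF a] by (auto simp: I_def)
  moreover have "\<phi> u \<in> borel_measurable (S \<Otimes>\<^sub>M seq_space)" for u
    unfolding \<phi>_def by measurable
  ultimately have "indep_vars (\<lambda>_. borel) (\<lambda>u \<omega>. \<phi> u (Z u \<omega>)) I"
    by (intro indep_vars_subset[OF indep_vars_compose2[OF indep_vars_Z]])
  then have "(\<integral>\<^sup>+\<omega>. (\<Prod>u\<in>I. \<phi> u (Z u \<omega>)) \<partial>M) = (\<Prod>u\<in>I. \<integral>\<^sup>+\<omega>. \<phi> u (Z u \<omega>) \<partial>M)"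
    by (intro indep_vars_nn_integral) (auto simp: I_def)
  moreover have "\<phi> (take i a) (Z (take i a) \<omega>) = \<psi> i (child_seq X (take i a) \<omega>)" if "i \<le> length a" for i \<omega>
    using that by (simp add: \<phi>_def Z_def)
  ultimately show ?thesis
    by (simp add: I_def prod.reindex[OF inj])
qed

lemma total_prog_eq_tail_plus_partial_prog:
  assumes "u \<in> tree_nodes"
  shows "total_prog X u \<omega> = (\<Sum>j. ennreal (child_seq X u \<omega> (j + k))) + ennreal (partial_prog X u k \<omega>)"
proof -
  have "total_prog X u \<omega> = (\<Sum>j. ennreal (child_seq X u \<omega> j))"
    by (simp add: total_prog_def child_seq_def)
  also have "\<dots> = (\<Sum>j. ennreal (child_seq X u \<omega> (j + k))) + (\<Sum>j<k. ennreal (child_seq X u \<omega> j))"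
    by (rule suminf_offset) simp
  finally show ?thesis
    using assms
    by (simp add: partial_prog_eq_sum_child_seq sum_ennreal child_seq_def X_nonneg tree_nodes_snoc)
qed

lemma children_before_root_imp_less:
  assumes a: "a \<in> tree_nodes" "a \<noteq> []" and ev: "children_before X a (hd a) [] \<omega>"
  shows "ennreal (\<Sum>i<length a. partial_prog X (take (Suc i) a) (rotate1 a ! i) \<omega>)
    < (\<Sum>j. ennreal (child_seq X [] \<omega> (j + hd a)))"
proof -
  let ?Q = "\<Sum>i<length a. partial_prog X (take (Suc i) a) (rotate1 a ! i) \<omega>"
  have "?Q \<ge> 0"
    by (intro sum_nonneg partial_prog_nonneg tree_nodes_take a)
  have "birth X [] \<omega> = 0" by (simp add: birth_def)
  with ev have "ennreal (birth X a \<omega> + partial_prog X a (hd a) \<omega>) < total_prog X [] \<omega>"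
    by (simp add: children_before_def)
  then have "ennreal (partial_prog X [] (hd a) \<omega> + ?Q)
      < (\<Sum>j. ennreal (child_seq X [] \<omega> (j + hd a))) + ennreal (partial_prog X [] (hd a) \<omega>)"
    by (simp only: birth_plus_partial_prog[OF a(2)] total_prog_eq_tail_plus_partial_prog[OF Nil_in_tree_nodes, where k = "hd a"])
  then have "ennreal (partial_prog X [] (hd a) \<omega>) + ennreal ?Q
      < ennreal (partial_prog X [] (hd a) \<omega>) + (\<Sum>j. ennreal (child_seq X [] \<omega> (j + hd a)))"
    using \<open>?Q \<ge> 0\<close> partial_prog_nonneg[OF Nil_in_tree_nodes, of "hd a"] by (simp add: ennreal_plus add.commute)
  then show ?thesis
    by (simp add: ennreal_add_left_cancel_less)
qed

end

locale cmj_assumption_A = cmj_process M S kern W X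
  for M :: "'a measure" and S :: "'s measure" and kern :: "'s \<Rightarrow> (nat \<Rightarrow> real) measure"
    and W :: "nat list \<Rightarrow> 'a \<Rightarrow> 's" and X :: "nat list \<Rightarrow> 'a \<Rightarrow> real" +
  fixes MY :: "'b measure" and Y :: "nat \<Rightarrow> 'b \<Rightarrow> real" and lam :: "nat \<Rightarrow> real"
  assumes A: "assumption_A M S kern W X MY Y lam"
begin

lemma prob_space_MY: "prob_space MY"
  using A by (simp add: assumption_A_def)

lemma Y_measurable: "1 \<le> n \<Longrightarrow> Y n \<in> borel_measurable MY"
  and Y_pos: "1 \<le> n \<Longrightarrow> y \<in> space MY \<Longrightarrow> 0 < Y n y"
  and Y_dominates_tail: "1 \<le> n \<Longrightarrow> w \<in> space S \<Longrightarrow>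
    emeasure (kern w) {x\<in>space (kern w). ennreal t < (\<Sum>i. ennreal (x (i + n)))}
      \<le> emeasure MY {y\<in>space MY. t < Y n y}"
  using A by (simp_all add: assumption_A_def)

lemma lam_pos: "1 \<le> n \<Longrightarrow> 0 < lam n"
  using A by (simp add: assumption_A_def)

lemma lam_mono: "1 \<le> n \<Longrightarrow> n \<le> m \<Longrightarrow> lam n \<le> lam m"
  using A unfolding assumption_A_def by (metis order_le_less order_refl)

definition laplace_mean :: "nat \<Rightarrow> nat \<Rightarrow> ennreal" where
  "laplace_mean n k = (\<integral>\<^sup>+ w. cond_laplace kern (lam n) k w \<partial>distr M S (W []))"

lemma laplace_mean_eq: "laplace_mean n k = (\<integral>\<^sup>+\<omega>. ennreal (exp (- lam n * partial_prog X [] k \<omega>)) \<partial>M)"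
  unfolding laplace_mean_def by (rule nn_integral_exp_partial_prog[symmetric]) simp

lemma nn_integral_exp_ennreal_tail_le_mgf:
  assumes n: "1 \<le> n"
  shows "(\<integral>\<^sup>+\<omega>. exp_ennreal (lam n) (\<Sum>i. ennreal (child_seq X [] \<omega> (i + n))) \<partial>M) \<le> mgf MY (Y n) (lam n)"
proof -
  have "(\<integral>\<^sup>+\<omega>. exp_ennreal (lam n) (\<Sum>i. ennreal (child_seq X [] \<omega> (i + n))) \<partial>M)
     = (\<integral>\<^sup>+w. (\<integral>\<^sup>+x. exp_ennreal (lam n) (\<Sum>i. ennreal (x (i + n))) \<partial>kern w) \<partial>distr M S (W []))"
    by (rule nn_integral_child_seq) measurable
  also have "\<dots> \<le> (\<integral>\<^sup>+w. mgf MY (Y n) (lam n) \<partial>distr M S (W []))"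
  proof (rule nn_integral_mono)
    fix w assume "w \<in> space (distr M S (W []))"
    then have w: "w \<in> space S" by simp
    have "(\<lambda>x. \<Sum>i. ennreal (x (i + n))) \<in> borel_measurable (kern w)"
      unfolding measurable_cong_sets[OF sets_kern[OF w] refl] by measurable
    then show "(\<integral>\<^sup>+x. exp_ennreal (lam n) (\<Sum>i. ennreal (x (i + n))) \<partial>kern w) \<le> mgf MY (Y n) (lam n)"
      unfolding mgf_def using n w
      by (intro nn_integral_exp_ennreal_le_stoch_dom prob_space_kern prob_space_MY Y_measurable
          lam_pos Y_dominates_tail less_imp_le[OF Y_pos])
  qed
  also have "\<dots> = mgf MY (Y n) (lam n)"
    using prob_space.emeasure_space_1[OF prob_space_distr[OF measurable_W]] by simp
  finally show ?thesis .
qed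


lemma emeasure_children_before_le:
  assumes a: "a \<in> tree_nodes" "a \<noteq> []"
  shows "emeasure M {\<omega>\<in>space M. children_before X a (hd a) [] \<omega>}
    \<le> mgf MY (Y (hd a)) (lam (hd a)) * prod_list (map (laplace_mean (hd a)) a)"
proof -
  define l where "l = lam (hd a)"
  have hd_ge: "1 \<le> hd a"
    using a by (cases a) (auto simp: tree_nodes_def)
  have l: "0 < l" unfolding l_def by (rule lam_pos[OF hd_ge])
  define \<psi> where "\<psi> i x = (if i = 0 then exp_ennreal l (\<Sum>j. ennreal (x (j + hd a)))
    else ennreal (exp (- l * (\<Sum>j < rotate1 a ! (i - 1). x j))))" for i and x :: "nat \<Rightarrow> real"
  have \<psi>_measurable: "\<psi> i \<in> borel_measurable seq_space" for i
    unfolding \<psi>_def by measurable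
  have \<psi>_Suc: "\<psi> (Suc i) (child_seq X (take (Suc i) a) \<omega>) =
      ennreal (exp (- l * partial_prog X (take (Suc i) a) (rotate1 a ! i) \<omega>))" for i \<omega>
    by (simp add: \<psi>_def partial_prog_eq_sum_child_seq)
  let ?E = "{\<omega>\<in>space M. children_before X a (hd a) [] \<omega>}"
  have "emeasure M ?E \<le> (\<integral>\<^sup>+\<omega>. indicator ?E \<omega> \<partial>M)"
    by (cases "?E \<in> sets M") (simp_all add: emeasure_notin_sets)
  also have "\<dots> \<le> (\<integral>\<^sup>+\<omega>. (\<Prod>i\<le>length a. \<psi> i (child_seq X (take i a) \<omega>)) \<partial>M)"
  proof (rule nn_integral_mono)
    fix \<omega>
    let ?Q = "\<Sum>i<length a. partial_prog X (take (Suc i) a) (rotate1 a ! i) \<omega>"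
    have "(\<Prod>i\<le>length a. \<psi> i (child_seq X (take i a) \<omega>))
        = exp_ennreal l (\<Sum>j. ennreal (child_seq X [] \<omega> (j + hd a))) * ennreal (exp (- l * ?Q))"
      by (simp add: prod.atMost_shift \<psi>_Suc prod_ennreal exp_sum sum_distrib_left)
         (simp add: \<psi>_def)
    moreover have "1 \<le> exp_ennreal l (\<Sum>j. ennreal (child_seq X [] \<omega> (j + hd a))) * ennreal (exp (- l * ?Q))"
      if "\<omega> \<in> ?E"
      using that by (intro one_le_exp_ennreal_mult l children_before_root_imp_less a) simp
    ultimately show "indicator ?E \<omega> \<le> (\<Prod>i\<le>length a. \<psi> i (child_seq X (take i a) \<omega>))"
      by (cases "\<omega> \<in> ?E") simp_all
  qed
  also have "\<dots> = (\<Prod>i\<le>length a. \<integral>\<^sup>+\<omega>. \<psi> i (child_seq X (take i a) \<omega>) \<partial>M)"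
    by (rule nn_integral_prod_ancestors[OF a(1) \<psi>_measurable])
  also have "\<dots> = (\<integral>\<^sup>+\<omega>. \<psi> 0 (child_seq X [] \<omega>) \<partial>M) *
      (\<Prod>i<length a. laplace_mean (hd a) (rotate1 a ! i))"
  proof -
    have "(\<integral>\<^sup>+\<omega>. \<psi> (Suc i) (child_seq X (take (Suc i) a) \<omega>) \<partial>M) = laplace_mean (hd a) (rotate1 a ! i)" for i
      unfolding \<psi>_Suc laplace_mean_def l_def
      by (rule nn_integral_exp_partial_prog[OF tree_nodes_take[OF a(1)]])
    then show ?thesis
      by (simp add: prod.atMost_shift)
  qed
  also have "\<dots> \<le> mgf MY (Y (hd a)) (lam (hd a)) * prod_list (map (laplace_mean (hd a)) a)"
  proof (rule mult_mono)
    show "(\<integral>\<^sup>+\<omega>. \<psi> 0 (child_seq X [] \<omega>) \<partial>M) \<le> mgf MY (Y (hd a)) (lam (hd a))"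
      using nn_integral_exp_ennreal_tail_le_mgf[OF hd_ge] by (simp add: \<psi>_def l_def)
    have "(\<Prod>i<length a. laplace_mean (hd a) (rotate1 a ! i)) = prod_list (map (laplace_mean (hd a)) (rotate1 a))"
      by (simp add: prod.list_conv_set_nth atLeast0LessThan)
    then show "(\<Prod>i<length a. laplace_mean (hd a) (rotate1 a ! i)) \<le> prod_list (map (laplace_mean (hd a)) a)"
      by (simp add: prod_list_map_rotate1)
  qed simp_all
  finally show ?thesis .
qed


lemma laplace_mean_antimono: "1 \<le> n' \<Longrightarrow> n' \<le> n \<Longrightarrow> laplace_mean n k \<le> laplace_mean n' k"
  unfolding laplace_mean_eq
  using lam_mono partial_prog_nonneg[OF Nil_in_tree_nodes]
  by (intro nn_integral_mono ennreal_leI) (simp add: mult_right_mono)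

lemma laplace_mean_le_one: "1 \<le> n \<Longrightarrow> laplace_mean n k \<le> 1"
proof -
  assume n: "1 \<le> n"
  have "laplace_mean n k \<le> (\<integral>\<^sup>+\<omega>. 1 \<partial>M)"
    unfolding laplace_mean_eq
    using lam_pos[OF n] partial_prog_nonneg[OF Nil_in_tree_nodes] by (intro nn_integral_mono) simp
  then show ?thesis
    by (simp add: emeasure_space_1)
qed

lemma one_le_mgf: "1 \<le> n \<Longrightarrow> 1 \<le> mgf MY (Y n) (lam n)"
proof -
  assume n: "1 \<le> n"
  interpret MY: prob_space MY by (rule prob_space_MY)
  have "(\<integral>\<^sup>+ y. 1 \<partial>MY) \<le> mgf MY (Y n) (lam n)"
    unfolding mgf_def
    using lam_pos[OF n] Y_pos[OF n] by (intro nn_integral_mono) (simp add: less_imp_le)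
  then show ?thesis
    by (simp add: MY.emeasure_space_1)
qed

lemma suminf_laplace_mean_diag_finite: "(\<Sum>k. laplace_mean k k) < \<infinity>"
proof -
  have "(\<Sum>k. laplace_mean (Suc k) (Suc k))
      \<le> (\<Sum>k. mgf MY (Y (Suc k)) (lam (Suc k)) * laplace_mean (Suc k) (Suc k))"
  proof (intro suminf_le allI)
    fix k
    show "laplace_mean (Suc k) (Suc k) \<le> mgf MY (Y (Suc k)) (lam (Suc k)) * laplace_mean (Suc k) (Suc k)"
      using mult_right_mono[OF one_le_mgf[of "Suc k"], of "laplace_mean (Suc k) (Suc k)"] by simp
  qed auto
  also have "\<dots> < \<infinity>"
    using A by (simp add: assumption_A_def laplace_mean_def)
  finally have "(\<Sum>k. laplace_mean (Suc k) (Suc k)) < \<infinity>" .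
  moreover have "(\<Sum>k. laplace_mean k k) = (\<Sum>k. laplace_mean (Suc k) (Suc k)) + laplace_mean 0 0"
    using suminf_offset[of "\<lambda>k. laplace_mean k k" 1] by simp
  moreover have "laplace_mean 0 0 = 1"
    by (simp add: laplace_mean_eq partial_prog_def emeasure_space_1)
  ultimately show ?thesis
    by (simp add: less_top)
qed

definition prob_partial_prog_zero :: "nat \<Rightarrow> ennreal" where
  "prob_partial_prog_zero k = emeasure M {\<omega>\<in>space M. partial_prog X [] k \<omega> = 0}"

lemma INF_exp_neg_lam: "0 \<le> p \<Longrightarrow> (INF i. ennreal (exp (- (lam (Suc i) * p)))) = (if p = 0 then 1 else 0)"
proof -
  assume p: "0 \<le> p"
  have "decseq (\<lambda>i. ennreal (exp (- (lam (Suc i) * p))))"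
    using lam_mono p by (intro decseq_SucI ennreal_leI) (simp add: mult_right_mono)
  moreover have "filterlim (\<lambda>i. lam (Suc i)) at_top sequentially"
    using A by (simp add: assumption_A_def filterlim_sequentially_Suc)
  from tendsto_ennrealI[OF tendsto_exp_neg_mult_at_top[OF this p]]
  have "(\<lambda>i. ennreal (exp (- (lam (Suc i) * p)))) \<longlonglongrightarrow> (if p = 0 then 1 else 0)"
    by (cases "p = 0") simp_all
  ultimately show ?thesis
    by (rule LIMSEQ_unique[OF LIMSEQ_INF])
qed

lemma laplace_mean_tendsto: "(\<lambda>n. laplace_mean n k) \<longlonglongrightarrow> prob_partial_prog_zero k"
proof -
  define f where "f = (\<lambda>i \<omega>. ennreal (exp (- lam (Suc i) * partial_prog X [] k \<omega>)))"
  have dec: "decseq (\<lambda>i. laplace_mean (Suc i) k)"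
    by (intro decseq_SucI laplace_mean_antimono) simp_all
  have "(INF i. laplace_mean (Suc i) k) = (INF i. integral\<^sup>N M (f i))"
    unfolding f_def laplace_mean_eq ..
  also have "\<dots> = (\<integral>\<^sup>+\<omega>. (INF i. f i \<omega>) \<partial>M)"
  proof (rule nn_integral_monotone_convergence_INF_decseq[symmetric])
    show "decseq f"
      using lam_mono partial_prog_nonneg[OF Nil_in_tree_nodes]
      by (intro decseq_SucI le_funI ennreal_leI) (simp add: f_def mult_right_mono)
    show "integral\<^sup>N M (f i) < \<infinity>" for i
      using laplace_mean_le_one[of "Suc i" k] by (simp add: f_def laplace_mean_eq le_less_trans)
  qed (simp add: f_def)
  also have "\<dots> = (\<integral>\<^sup>+\<omega>. indicator {\<omega>\<in>space M. partial_prog X [] k \<omega> = 0} \<omega> \<partial>M)"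
    by (intro nn_integral_cong) (simp add: f_def INF_exp_neg_lam partial_prog_nonneg[OF Nil_in_tree_nodes] indicator_def)
  also have "\<dots> = prob_partial_prog_zero k"
    by (simp add: prob_partial_prog_zero_def)
  finally show ?thesis
    using LIMSEQ_imp_Suc[OF LIMSEQ_INF[OF dec]] by simp
qed


text \<open>If \<open>P\<^sub>k = 0\<close> for some \<open>k \<le> N\<close>, the largest such \<open>k\<close> bounds their number and has
  \<open>X(k) = 0\<close>.\<close>
lemma card_partial_prog_root_zero_le:
  "of_nat (card {k\<in>{1..N}. partial_prog X [] k \<omega> = 0}) \<le> Sup {ennreal (real k) | k. 1 \<le> k \<and> X [k] \<omega> = 0}"
proof (cases "{k\<in>{1..N}. partial_prog X [] k \<omega> = 0} = {}")
  case False
  let ?A = "{k\<in>{1..N}. partial_prog X [] k \<omega> = 0}"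
  define r where "r = Max ?A"
  have r: "r \<in> ?A"
    using False unfolding r_def by (intro Max_in) auto
  have "?A \<subseteq> {1..r}"
    unfolding r_def by (auto intro: Max_ge)
  then have "card ?A \<le> r"
    using card_mono[of "{1..r}" ?A] by simp
  have "\<forall>j\<in>{1..r}. X [j] \<omega> = 0"
    using r by (subst sum_nonneg_eq_0_iff[symmetric]) (auto simp: partial_prog_def tree_nodes_def X_nonneg)
  with r have "ennreal (real r) \<le> Sup {ennreal (real k) | k. 1 \<le> k \<and> X [k] \<omega> = 0}"
    by (intro Sup_upper) auto
  moreover have "of_nat (card ?A) \<le> ennreal (real r)"
    using \<open>card ?A \<le> r\<close> by (simp add: ennreal_of_nat_eq_real_of_nat)
  ultimately show ?thesis
    by (rule order_trans[rotated])
next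
  case True
  show ?thesis by (simp only: True card.empty of_nat_0 zero_le)
qed

lemma sum_prob_partial_prog_zero_le:
  "(\<Sum>k\<in>{1..N}. prob_partial_prog_zero k) \<le> (\<integral>\<^sup>+ \<omega>. Sup {ennreal (real k) | k. 1 \<le> k \<and> X [k] \<omega> = 0} \<partial>M)"
proof -
  have "(\<Sum>k\<in>{1..N}. prob_partial_prog_zero k)
      = (\<integral>\<^sup>+ \<omega>. (\<Sum>k\<in>{1..N}. indicator {\<omega>\<in>space M. partial_prog X [] k \<omega> = 0} \<omega>) \<partial>M)"
    by (simp add: prob_partial_prog_zero_def nn_integral_sum)
  also have "\<dots> = (\<integral>\<^sup>+ \<omega>. of_nat (card {k\<in>{1..N}. partial_prog X [] k \<omega> = 0}) \<partial>M)"
  proof (rule nn_integral_cong)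
    fix \<omega> assume "\<omega> \<in> space M"
    then have "(\<Sum>k\<in>{1..N}. indicator {\<omega>\<in>space M. partial_prog X [] k \<omega> = 0} \<omega> :: ennreal)
        = (\<Sum>k\<in>{1..N}. indicator {k. partial_prog X [] k \<omega> = 0} k)"
      by (simp add: indicator_def)
    also have "\<dots> = of_nat (card {k\<in>{1..N}. partial_prog X [] k \<omega> = 0})"
      by (simp add: indicator_def sum.inter_filter Int_def)
    finally show "(\<Sum>k\<in>{1..N}. indicator {\<omega>\<in>space M. partial_prog X [] k \<omega> = 0} \<omega>)
        = (of_nat (card {k\<in>{1..N}. partial_prog X [] k \<omega> = 0}) :: ennreal)" .
  qed
  also have "\<dots> \<le> (\<integral>\<^sup>+ \<omega>. Sup {ennreal (real k) | k. 1 \<le> k \<and> X [k] \<omega> = 0} \<partial>M)"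
    by (intro nn_integral_mono card_partial_prog_root_zero_le)
  finally show ?thesis .
qed


lemma eventually_sum_laplace_mean_le:
  "\<exists>\<zeta>. 0 \<le> \<zeta> \<and> \<zeta> < 1 \<and> (\<forall>\<^sub>F n in sequentially. (\<Sum>k\<in>{1..n}. laplace_mean n k) \<le> ennreal \<zeta>)"
proof (rule eventually_sum_le_less_one[OF laplace_mean_antimono suminf_laplace_mean_diag_finite
      laplace_mean_tendsto sum_prob_partial_prog_zero_le])
  show "(\<integral>\<^sup>+ \<omega>. Sup {ennreal (real k) | k. 1 \<le> k \<and> X [k] \<omega> = 0} \<partial>M) < 1"
    using A by (simp add: assumption_A_def)
qed

lemma sum_conservative_children_before_le:
  assumes a1: "1 \<le> a1"
  shows "(\<Sum>a\<in>{a. a \<in> tree_nodes \<and> length a = Suc n \<and> hd a = a1 \<and> conservative a}.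
      emeasure M {\<omega>\<in>space M. children_before X a a1 [] \<omega>})
    \<le> mgf MY (Y a1) (lam a1) * laplace_mean a1 a1 * (\<Sum>k\<in>{1..a1}. laplace_mean a1 k) ^ n"
proof -
  let ?L = "{l. set l \<subseteq> {1..a1} \<and> length l = n}"
  have "(\<Sum>a\<in>{a. a \<in> tree_nodes \<and> length a = Suc n \<and> hd a = a1 \<and> conservative a}.
      emeasure M {\<omega>\<in>space M. children_before X a a1 [] \<omega>})
    = (\<Sum>l\<in>?L. emeasure M {\<omega>\<in>space M. children_before X (a1 # l) a1 [] \<omega>})"
    unfolding conservative_nodes_eq_image[OF a1] by (subst sum.reindex) (auto simp: inj_on_def)
  also have "\<dots> \<le> (\<Sum>l\<in>?L. mgf MY (Y a1) (lam a1) * (laplace_mean a1 a1 * prod_list (map (laplace_mean a1) l)))"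
  proof (rule sum_mono)
    fix l assume "l \<in> ?L"
    with a1 have "a1 # l \<in> tree_nodes"
      by (auto simp: tree_nodes_def)
    from emeasure_children_before_le[OF this]
    show "emeasure M {\<omega>\<in>space M. children_before X (a1 # l) a1 [] \<omega>}
        \<le> mgf MY (Y a1) (lam a1) * (laplace_mean a1 a1 * prod_list (map (laplace_mean a1) l))"
      by simp
  qed
  also have "\<dots> = mgf MY (Y a1) (lam a1) * laplace_mean a1 a1 * (\<Sum>k\<in>{1..a1}. laplace_mean a1 k) ^ n"
    by (simp add: sum_distrib_left sum_lists_length_prod_list mult.assoc flip: sum_distrib_left)
  finally show ?thesis .
qed

end

theorem mainTheorem2:
  fixes M :: "'a measure" and S :: "'s measure" and kern :: "'s \<Rightarrow> (nat \<Rightarrow> real) measure"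
    and W :: "nat list \<Rightarrow> 'a \<Rightarrow> 's" and X :: "nat list \<Rightarrow> 'a \<Rightarrow> real"
    and MY :: "'b measure" and Y :: "nat \<Rightarrow> 'b \<Rightarrow> real" and lam :: "nat \<Rightarrow> real"
  assumes "cmj_standing M S kern W X"
    and "assumption_A M S kern W X MY Y lam"
  shows "\<exists>\<zeta>::real. \<zeta> < 1 \<and> (\<exists>K::real. K > 0 \<and>
           (\<forall>(a1::nat) (m::nat). real a1 > K \<longrightarrow> m \<ge> 1 \<longrightarrow>
              (\<Sum>a\<in>{a. a \<in> tree_nodes \<and> length a = m \<and> hd a = a1 \<and> conservative a}.
                  emeasure M {\<omega>\<in>space M. children_before X a a1 [] \<omega>})
              \<le> ennreal (\<zeta> ^ (m - 1)) * mgf MY (Y a1) (lam a1) *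
                 (\<integral>\<^sup>+ w. cond_laplace kern (lam a1) a1 w \<partial>(distr M S (W [])))))"
proof -
  interpret cmj_assumption_A M S kern W X MY Y lam
    using assms by (simp add: cmj_assumption_A_def cmj_process_def cmj_assumption_A_axioms_def)
  obtain \<zeta> K where \<zeta>: "0 \<le> \<zeta>" "\<zeta> < 1"
    and K: "\<And>n. K \<le> n \<Longrightarrow> (\<Sum>k\<in>{1..n}. laplace_mean n k) \<le> ennreal \<zeta>"
    using eventually_sum_laplace_mean_le by (auto simp: eventually_sequentially)
  have "(\<Sum>a\<in>{a. a \<in> tree_nodes \<and> length a = Suc n \<and> hd a = a1 \<and> conservative a}.
           emeasure M {\<omega>\<in>space M. children_before X a a1 [] \<omega>})
        \<le> ennreal (\<zeta> ^ n) * mgf MY (Y a1) (lam a1) * laplace_mean a1 a1"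
    if "real K + 1 < real a1" for a1 n
  proof -
    have a1: "1 \<le> a1" "K \<le> a1" using that by auto
    note sum_conservative_children_before_le[OF a1(1), of n]
    also have "mgf MY (Y a1) (lam a1) * laplace_mean a1 a1 * (\<Sum>k\<in>{1..a1}. laplace_mean a1 k) ^ n
        \<le> mgf MY (Y a1) (lam a1) * laplace_mean a1 a1 * ennreal \<zeta> ^ n"
      by (intro mult_left_mono power_mono K a1) simp_all
    also have "\<dots> = ennreal (\<zeta> ^ n) * mgf MY (Y a1) (lam a1) * laplace_mean a1 a1"
      using \<zeta>(1) by (simp add: ennreal_power mult_ac)
    finally show ?thesis .
  qed
  then show ?thesis
    using \<zeta>(2) by (intro exI[of _ \<zeta>] conjI exI[of _ "real K + 1"] allI impI)
      (auto simp: laplace_mean_def Suc_le_eq dest!: gr0_implies_Suc)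
qed

end
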